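(* Let $S$ be a monoid with a unique zero element in which every nonzero element is invertible, and let $A$ be a finitely generated right $S$-act. If $X$ and $Y$ are minimal generating sets for $A$, then $|X|=|Y|$.
   Context: A (right) $S$-act is a nonempty set $A$ with an action $(a,s)\mapsto as$, $a1=a$, $a(st)=(as)t$. A subset $X\subseteq A$ generates $A$ if $A=\bigcup_{x\in X}xS$; it is a minimal generating set if no proper subset of it generates $A$. $A$ is finitely generated if it has a finite generating set. A zero of the monoid $S$ is an element $z$ with $zs=sz=z$ for all $s\in S$. *)

theory Defs
  imports Main "HOL-Library.Equipollence"
begin

definition right_act :: "'a set \<Rightarrow> ('a \<Rightarrow> 'm::monoid_mult \<Rightarrow> 'a) \<Rightarrow> bool" where
  "right_act A act \<longleftrightarrow> A \<noteq> {} \<and>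
     (\<forall>a\<in>A. \<forall>s. act a s \<in> A) \<and>
     (\<forall>a\<in>A. act a 1 = a) \<and>
     (\<forall>a\<in>A. \<forall>s t. act a (s * t) = act (act a s) t)"

definition generates :: "('a \<Rightarrow> 'm::monoid_mult \<Rightarrow> 'a) \<Rightarrow> 'a set \<Rightarrow> 'a set \<Rightarrow> bool" where
  "generates act X A \<longleftrightarrow> X \<subseteq> A \<and> A = (\<Union>x\<in>X. range (act x))"

definition minimal_generating_set :: "('a \<Rightarrow> 'm::monoid_mult \<Rightarrow> 'a) \<Rightarrow> 'a set \<Rightarrow> 'a set \<Rightarrow> bool" where
  "minimal_generating_set act X A \<longleftrightarrow> generates act X A \<and> (\<forall>Z. Z \<subset> X \<longrightarrow> \<not> generates act Z A)"

definition finitely_generated :: "('a \<Rightarrow> 'm::monoid_mult \<Rightarrow> 'a) \<Rightarrow> 'a set \<Rightarrow> bool" where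
  "finitely_generated act A \<longleftrightarrow> (\<exists>X. finite X \<and> generates act X A)"

definition is_zero :: "'m::monoid_mult \<Rightarrow> bool" where
  "is_zero z \<longleftrightarrow> (\<forall>s. z * s = z \<and> s * z = z)"

definition invertible :: "'m::monoid_mult \<Rightarrow> bool" where
  "invertible s \<longleftrightarrow> (\<exists>t. s * t = 1 \<and> t * s = 1)"

end

theory Submission
  imports Defs
begin

text \<open>In a minimal generating set \<open>X\<close> no generator lies in the cyclic subact
  \<open>x'S\<close> of another generator \<open>x'\<close>, since otherwise it could be dropped. Given a second
  minimal generating set \<open>Y\<close>, send \<open>x \<in> X\<close> to some \<open>y \<in> Y\<close> with \<open>x \<in> yS\<close>. If
  \<open>x\<^sub>1, x\<^sub>2\<close> share the image \<open>y\<close>, pick \<open>x' \<in> X\<close> with \<open>y \<in> x'S\<close>; then both \<open>x\<^sub>i \<in> x'S\<close>,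
  so \<open>x\<^sub>1 = x' = x\<^sub>2\<close>.\<close>

lemma right_act_range_subset:
  assumes "right_act A act" and "a \<in> A" and "b \<in> range (act a)"
  shows "range (act b) \<subseteq> range (act a)"
proof
  fix c assume "c \<in> range (act b)"
  then obtain t where "c = act b t" by auto
  moreover obtain s where "b = act a s" using assms(3) by auto
  ultimately have "c = act a (s * t)"
    using assms(1,2) by (simp add: right_act_def)
  then show "c \<in> range (act a)" by simp
qed

lemma generates_Diff_redundant:
  assumes "right_act A act" and gen: "generates act X A"
    and "x' \<in> X" and "x \<noteq> x'" and "x \<in> range (act x')"
  shows "generates act (X - {x}) A"
proof -
  from gen have XA: "X \<subseteq> A" and AX: "A = (\<Union>z\<in>X. range (act z))"
    unfolding generates_def by blast+
  have "range (act x) \<subseteq> range (act x')"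
    using right_act_range_subset[OF assms(1) _ assms(5)] XA \<open>x' \<in> X\<close> by blast
  with XA AX \<open>x' \<in> X\<close> \<open>x \<noteq> x'\<close> show ?thesis
    unfolding generates_def by blast
qed

lemma minimal_generating_set_in_range_eq:
  assumes "right_act A act" and min: "minimal_generating_set act X A"
    and "x \<in> X" and "x' \<in> X" and "x \<in> range (act x')"
  shows "x = x'"
proof (rule ccontr)
  assume "x \<noteq> x'"
  with assms have "generates act (X - {x}) A"
    by (intro generates_Diff_redundant) (auto simp: minimal_generating_set_def)
  moreover have "X - {x} \<subset> X" using \<open>x \<in> X\<close> by auto
  ultimately show False using min by (auto simp: minimal_generating_set_def)
qed

lemma minimal_generating_set_lepoll:
  assumes act: "right_act A act"
    and minX: "minimal_generating_set act X A" and minY: "minimal_generating_set act Y A"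
  shows "X \<lesssim> Y"
proof -
  from minX have XA: "X \<subseteq> A" and AX: "A = (\<Union>x\<in>X. range (act x))"
    by (auto simp: minimal_generating_set_def generates_def)
  from minY have YA: "Y \<subseteq> A" and AY: "A = (\<Union>y\<in>Y. range (act y))"
    by (auto simp: minimal_generating_set_def generates_def)
  have "\<forall>x\<in>X. \<exists>y. y \<in> Y \<and> x \<in> range (act y)" using XA AY by blast
  then obtain f where f: "\<And>x. x \<in> X \<Longrightarrow> f x \<in> Y \<and> x \<in> range (act (f x))"
    by metis
  have "inj_on f X"
  proof (rule inj_onI)
    fix x\<^sub>1 x\<^sub>2 assume x\<^sub>1: "x\<^sub>1 \<in> X" and x\<^sub>2: "x\<^sub>2 \<in> X" and same: "f x\<^sub>1 = f x\<^sub>2"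
    obtain x' where x': "x' \<in> X" "f x\<^sub>1 \<in> range (act x')"
      using f[OF x\<^sub>1] YA AX by blast
    have "range (act (f x\<^sub>1)) \<subseteq> range (act x')"
      using right_act_range_subset[OF act] XA x' by blast
    then have "x\<^sub>1 \<in> range (act x')" and "x\<^sub>2 \<in> range (act x')"
      using f[OF x\<^sub>1] f[OF x\<^sub>2] same by auto
    then show "x\<^sub>1 = x\<^sub>2"
      using minimal_generating_set_in_range_eq[OF act minX] x\<^sub>1 x\<^sub>2 x'(1) by metis
  qed
  then show ?thesis unfolding lepoll_def using f by blast
qed

theorem lemma3p3:
  fixes A :: "'a set" and act :: "'a \<Rightarrow> 'm::monoid_mult \<Rightarrow> 'a" and X Y :: "'a set"
  assumes "\<exists>!z::'m. is_zero z"
    and "\<forall>s::'m. \<not> is_zero s \<longrightarrow> invertible s"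
    and "right_act A act"
    and "finitely_generated act A"
    and "minimal_generating_set act X A"
    and "minimal_generating_set act Y A"
  shows "X \<approx> Y"
  using minimal_generating_set_lepoll[OF assms(3,5,6)] minimal_generating_set_lepoll[OF assms(3,6,5)]
  by (rule lepoll_antisym)

end
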